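(* Let $\mathcal{J}$ be a Jordan algebra of finite dimension $n$ over a field $\mathcal{F}$ of characteristic different from $2$, let $\Lambda=(\lambda_{i,j})_{i,j=1,\dots,n}$ be an $n\times n$ matrix all of whose entries are non-zero elements of $\mathcal{F}$, and let $\mathcal{V}$ be a basis of $\mathcal{J}$. Let $\Delta:\mathcal{J}\to\mathcal{J}$ be a map such that for every $x,y\in\mathcal{J}$ there is an automorphism $\Phi_{x,y}$ of $\mathcal{J}$ which is $\Lambda$-symmetric with respect to $\mathcal{V}$ and satisfies $\Delta(x)=\Phi_{x,y}(x)$ and $\Delta(y)=\Phi_{x,y}(y)$. Then $\Delta$ is an automorphism.
   Context: For a linear map $\psi$ on $\mathcal{J}$ and the ordered basis $\mathcal{V}=(v_1,\dots,v_n)$, the matrix of $\psi$ is $(x_{i,j})$ with $\psi(v_j)=\sum_i x_{i,j}v_i$; $\psi$ is $\Lambda$-symmetric with respect to $\mathcal{V}$ if this matrix equals $(\lambda_{i,j}a_{i,j})_{i,j}$ for some symmetric matrix $(a_{i,j})$. *)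

theory Defs
  imports Complex_Main
begin

text \<open>Bilinearity in the second
  argument follows from linearity in the first plus commutativity.\<close>
definition jordan_algebra :: "('f::field \<Rightarrow> 'v::ab_group_add \<Rightarrow> 'v) \<Rightarrow> ('v \<Rightarrow> 'v \<Rightarrow> 'v) \<Rightarrow> bool" where
  "jordan_algebra sc m \<longleftrightarrow> vector_space sc
     \<and> (\<forall>x y z. m (x + y) z = m x z + m y z)
     \<and> (\<forall>c x y. m (sc c x) y = sc c (m x y))
     \<and> (\<forall>x y. m x y = m y x)
     \<and> (\<forall>x y. m (m x y) (m x x) = m x (m y (m x x)))"

definition ordered_basis :: "('f::field \<Rightarrow> 'v::ab_group_add \<Rightarrow> 'v) \<Rightarrow> nat \<Rightarrow> (nat \<Rightarrow> 'v) \<Rightarrow> bool" where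
  "ordered_basis sc n b \<longleftrightarrow> inj_on b {..<n}
     \<and> \<not> module.dependent sc (b ` {..<n})
     \<and> module.span sc (b ` {..<n}) = UNIV"

definition jordan_automorphism :: "('f::field \<Rightarrow> 'v::ab_group_add \<Rightarrow> 'v) \<Rightarrow> ('v \<Rightarrow> 'v \<Rightarrow> 'v) \<Rightarrow> ('v \<Rightarrow> 'v) \<Rightarrow> bool" where
  "jordan_automorphism sc m f \<longleftrightarrow> Vector_Spaces.linear sc sc f \<and> bij f
     \<and> (\<forall>x y. f (m x y) = m (f x) (f y))"

definition lambda_symmetric :: "('f::field \<Rightarrow> 'v::ab_group_add \<Rightarrow> 'v) \<Rightarrow> nat \<Rightarrow> (nat \<Rightarrow> 'v) \<Rightarrow> (nat \<Rightarrow> nat \<Rightarrow> 'f) \<Rightarrow> ('v \<Rightarrow> 'v) \<Rightarrow> bool" where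
  "lambda_symmetric sc n b \<Lambda> \<psi> \<longleftrightarrow> (\<exists>a::nat \<Rightarrow> nat \<Rightarrow> 'f.
     (\<forall>i<n. \<forall>j<n. a i j = a j i)
     \<and> (\<forall>j<n. \<psi> (b j) = (\<Sum>i<n. sc (\<Lambda> i j * a i j) (b i))))"

end

theory Submission
  imports Defs
begin

text \<open>Write the matrix of a \<open>\<Lambda>\<close>-symmetric automorphism \<open>\<Phi>\<close> as \<open>(\<lambda>\<^sub>i\<^sub>j a\<^sub>i\<^sub>j)\<close>.
  Its \<open>k\<close>-th column is the coordinate vector of \<open>\<Phi> (v\<^sub>k)\<close>, and by the symmetry of \<open>a\<close>
  its \<open>k\<close>-th row is \<open>(\<lambda>\<^sub>k\<^sub>j / \<lambda>\<^sub>j\<^sub>k) a\<^sub>j\<^sub>k\<close>, i.e. it is determined by that column.  Hence the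
  \<open>k\<close>-th coordinate of \<open>\<Phi> x\<close> depends only on \<open>x\<close> and \<open>\<Phi> (v\<^sub>k)\<close>.  Applying this to the
  automorphism \<open>\<Phi>\<^sub>x\<^sub>,\<^sub>v\<^sub>k\<close> shows that every coordinate of \<open>\<Delta> x\<close> is a fixed linear form
  in \<open>x\<close>, so \<open>\<Delta>\<close> is linear.  Being linear and agreeing at each point with an injective
  linear map, \<open>\<Delta>\<close> has trivial kernel, hence is bijective by finite dimensionality.
  Finally \<open>\<Delta>\<close> preserves squares, which by polarization (using \<open>2 \<noteq> 0\<close>) means it
  preserves products.\<close>

locale ordered_basis_space = vector_space sc
  for sc :: "'f::field \<Rightarrow> 'v::ab_group_add \<Rightarrow> 'v" +
  fixes n :: nat and b :: "nat \<Rightarrow> 'v"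
  assumes ordered_basis: "ordered_basis sc n b"
begin

lemma inj_on_basis: "inj_on b {..<n}"
  and independent_basis: "independent (b ` {..<n})"
  and span_basis: "span (b ` {..<n}) = UNIV"
  using ordered_basis by (auto simp: ordered_basis_def)

sublocale finite_dimensional_vector_space sc "b ` {..<n}"
  by unfold_locales (simp_all add: independent_basis span_basis)

definition coord :: "'v \<Rightarrow> nat \<Rightarrow> 'f" where
  "coord x j = representation (b ` {..<n}) x (b j)"

lemma sum_coord_basis: "(\<Sum>j<n. sc (coord x j) (b j)) = x"
proof -
  have "(\<Sum>j<n. sc (coord x j) (b j)) = (\<Sum>v\<in>b ` {..<n}. sc (representation (b ` {..<n}) x v) v)"
    by (simp add: coord_def sum.reindex[OF inj_on_basis])
  also have "\<dots> = x"
    by (rule sum_representation_eq) (simp_all add: independent_basis span_basis)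
  finally show ?thesis .
qed

lemma coord_eqI: "(\<And>k. k < n \<Longrightarrow> coord x k = coord y k) \<Longrightarrow> x = y"
  by (metis (no_types, lifting) lessThan_iff sum.cong sum_coord_basis)

lemma coord_add: "coord (x + y) k = coord x k + coord y k"
  by (simp add: coord_def representation_add[OF independent_basis] span_basis)

lemma coord_scale: "coord (sc c x) k = c * coord x k"
  by (simp add: coord_def representation_scale[OF independent_basis] span_basis)

lemma coord_basis: "j < n \<Longrightarrow> k < n \<Longrightarrow> coord (b j) k = (if j = k then 1 else 0)"
  using inj_on_basis
  by (auto simp: coord_def representation_basis[OF independent_basis] inj_on_def)

lemma coord_sum_basis:
  assumes "k < n"
  shows "coord (\<Sum>i<n. sc (c i) (b i)) k = c k"
proof -
  have "coord (\<Sum>i<n. sc (c i) (b i)) k = (\<Sum>i<n. c i * coord (b i) k)"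
    by (simp add: coord_def representation_sum[OF independent_basis]
        representation_scale[OF independent_basis] span_basis)
  also have "\<dots> = c k"
    using assms by (simp add: coord_basis if_distrib[of "(*) _"] cong: if_cong)
  finally show ?thesis .
qed

lemma coord_linear_image:
  assumes "Vector_Spaces.linear sc sc f"
    and "\<forall>j<n. f (b j) = (\<Sum>i<n. sc (M i j) (b i))"
    and "k < n"
  shows "coord (f x) k = (\<Sum>j<n. M k j * coord x j)"
proof -
  interpret f: Vector_Spaces.linear sc sc f by fact
  have "f x = (\<Sum>j<n. sc (coord x j) (f (b j)))"
    by (subst sum_coord_basis[of x, symmetric]) (simp add: f.sum f.scale)
  also have "\<dots> = (\<Sum>i<n. sc (\<Sum>j<n. M i j * coord x j) (b i))"
    using assms(2)
    by (simp add: scale_sum_right scale_sum_left mult.commute) (rule sum.swap)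
  finally show ?thesis
    using assms(3) coord_sum_basis by simp
qed

lemma lambda_symmetric_coord:
  assumes nonzero: "\<forall>i<n. \<forall>j<n. \<Lambda> i j \<noteq> 0"
    and linear: "Vector_Spaces.linear sc sc \<Phi>"
    and sym: "lambda_symmetric sc n b \<Lambda> \<Phi>"
    and "k < n"
  shows "coord (\<Phi> x) k = (\<Sum>j<n. \<Lambda> k j / \<Lambda> j k * coord (\<Phi> (b k)) j * coord x j)"
proof -
  obtain a where a_sym: "\<forall>i<n. \<forall>j<n. a i j = a j i"
    and matrix: "\<forall>j<n. \<Phi> (b j) = (\<Sum>i<n. sc (\<Lambda> i j * a i j) (b i))"
    using sym unfolding lambda_symmetric_def by blast
  have column: "coord (\<Phi> (b k)) j = \<Lambda> j k * a j k" if "j < n" for j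
    using matrix \<open>k < n\<close> that coord_sum_basis[of j "\<lambda>i. \<Lambda> i k * a i k"] by simp
  have "coord (\<Phi> x) k = (\<Sum>j<n. \<Lambda> k j * a k j * coord x j)"
    by (rule coord_linear_image[OF linear matrix \<open>k < n\<close>])
  also have "\<dots> = (\<Sum>j<n. \<Lambda> k j / \<Lambda> j k * coord (\<Phi> (b k)) j * coord x j)"
    using nonzero a_sym \<open>k < n\<close> by (intro sum.cong) (simp_all add: column)
  finally show ?thesis .
qed

lemma linear_if_two_local_lambda_symmetric:
  assumes nonzero: "\<forall>i<n. \<forall>j<n. \<Lambda> i j \<noteq> 0"
    and two_local: "\<forall>x y. \<exists>\<Phi>. Vector_Spaces.linear sc sc \<Phi> \<and> lambda_symmetric sc n b \<Lambda> \<Phi>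
                                \<and> \<Delta> x = \<Phi> x \<and> \<Delta> y = \<Phi> y"
  shows "Vector_Spaces.linear sc sc \<Delta>"
proof -
  have coord_\<Delta>: "coord (\<Delta> x) k = (\<Sum>j<n. \<Lambda> k j / \<Lambda> j k * coord (\<Delta> (b k)) j * coord x j)"
    if "k < n" for x k
  proof -
    obtain \<Phi> where "Vector_Spaces.linear sc sc \<Phi>" "lambda_symmetric sc n b \<Lambda> \<Phi>"
      and "\<Delta> x = \<Phi> x" "\<Delta> (b k) = \<Phi> (b k)"
      using two_local by blast
    with lambda_symmetric_coord[OF nonzero] \<open>k < n\<close> show ?thesis by simp
  qed
  have "\<Delta> (x + y) = \<Delta> x + \<Delta> y" for x y
    by (rule coord_eqI) (simp add: coord_\<Delta> coord_add distrib_left sum.distrib)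
  moreover have "\<Delta> (sc c x) = sc c (\<Delta> x)" for c x
    by (rule coord_eqI) (simp add: coord_\<Delta> coord_scale sum_distrib_left ac_simps)
  ultimately show ?thesis
    unfolding Vector_Spaces.linear_iff using vector_space_axioms by blast
qed

end

lemma inj_if_pointwise_injective_linear:
  assumes "Vector_Spaces.linear s1 s2 f"
    and "\<forall>x. \<exists>g. Vector_Spaces.linear s1 s2 g \<and> inj g \<and> f x = g x"
  shows "inj f"
proof -
  interpret f: Vector_Spaces.linear s1 s2 f by fact
  have "x = 0" if "f x = 0" for x
  proof -
    obtain g where "Vector_Spaces.linear s1 s2 g" "inj g" "f x = g x"
      using assms(2) by blast
    then interpret g: Vector_Spaces.linear s1 s2 g by simp
    from \<open>inj g\<close> \<open>f x = g x\<close> \<open>f x = 0\<close> show "x = 0"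
      by (simp add: g.inj_iff_eq_0)
  qed
  then show ?thesis
    by (simp add: f.inj_iff_eq_0)
qed

lemma mult_preserving_if_square_preserving:
  fixes sc :: "'f::field \<Rightarrow> 'v::ab_group_add \<Rightarrow> 'v"
    and m :: "'v \<Rightarrow> 'v \<Rightarrow> 'v"
  assumes "vector_space sc" and "(2::'f) \<noteq> 0"
    and add_left: "\<And>x y z. m (x + y) z = m x z + m y z"
    and commute: "\<And>x y. m x y = m y x"
    and additive: "\<And>x y. f (x + y) = f x + f y"
    and squares: "\<And>x. f (m x x) = m (f x) (f x)"
  shows "f (m x y) = m (f x) (f y)"
proof -
  interpret vector_space sc by fact
  have add_right: "m z (x + y) = m z x + m z y" for x y z
    using add_left commute by metis
  have "f (m x x) + (f (m x y) + f (m x y)) + f (m y y) = f (m (x + y) (x + y))"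
    by (simp add: additive add_left add_right commute[of y x] add_ac)
  also have "\<dots> = m (f (x + y)) (f (x + y))"
    by (rule squares)
  also have "\<dots> = m (f x) (f x) + (m (f x) (f y) + m (f x) (f y)) + m (f y) (f y)"
    by (simp add: additive add_left add_right commute[of "f y" "f x"] add_ac)
  finally have "f (m x y) + f (m x y) = m (f x) (f y) + m (f x) (f y)"
    by (simp add: squares)
  moreover have "sc 2 z = z + z" for z
    using scale_left_distrib[of 1 1 z] by (simp add: one_add_one)
  ultimately have "sc 2 (f (m x y)) = sc 2 (m (f x) (f y))"
    by simp
  then show ?thesis
    using \<open>(2::'f) \<noteq> 0\<close> by simp
qed

theorem theorem4p1:
  fixes sc :: "'f::field \<Rightarrow> 'v::ab_group_add \<Rightarrow> 'v"
    and m :: "'v \<Rightarrow> 'v \<Rightarrow> 'v"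
    and n :: nat
    and b :: "nat \<Rightarrow> 'v"
    and \<Lambda> :: "nat \<Rightarrow> nat \<Rightarrow> 'f"
    and \<Delta> :: "'v \<Rightarrow> 'v"
  assumes char: "(2::'f) \<noteq> 0"
    and jordan: "jordan_algebra sc m"
    and basis: "ordered_basis sc n b"
    and nonzero: "\<forall>i<n. \<forall>j<n. \<Lambda> i j \<noteq> 0"
    and local2: "\<forall>x y. \<exists>\<Phi>. jordan_automorphism sc m \<Phi> \<and> lambda_symmetric sc n b \<Lambda> \<Phi>
                        \<and> \<Delta> x = \<Phi> x \<and> \<Delta> y = \<Phi> y"
  shows "jordan_automorphism sc m \<Delta>"
proof -
  have vs: "vector_space sc"
    and add_left: "\<And>x y z. m (x + y) z = m x z + m y z"
    and commute: "\<And>x y. m x y = m y x"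
    using jordan unfolding jordan_algebra_def by blast+
  interpret ordered_basis_space sc n b
    using vs basis by (simp add: ordered_basis_space_def ordered_basis_space_axioms_def)
  have linear: "Vector_Spaces.linear sc sc \<Delta>"
    using local2 unfolding jordan_automorphism_def
    by (intro linear_if_two_local_lambda_symmetric[OF nonzero]) blast
  then interpret \<Delta>: Vector_Spaces.linear sc sc \<Delta> .
  have inj: "inj \<Delta>"
    using local2 unfolding jordan_automorphism_def
    by (intro inj_if_pointwise_injective_linear[OF linear]) (blast dest: bij_is_inj)
  have "\<Delta> (m x x) = m (\<Delta> x) (\<Delta> x)" for x
    using local2[rule_format, of x "m x x"] unfolding jordan_automorphism_def
    by (elim exE conjE) simp
  then have "\<Delta> (m x y) = m (\<Delta> x) (\<Delta> y)" for x y
    by (rule mult_preserving_if_square_preserving[OF vs char add_left commute \<Delta>.add])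
  moreover have "surj \<Delta>"
    using linear inj by (rule linear_inj_imp_surj)
  ultimately show ?thesis
    using linear inj by (simp add: jordan_automorphism_def bij_def)
qed

end
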